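(* For all integers $1\le r\le n$, $m(n,r)\le m(n,r-1)\,p(n,r)$.
   Context: $m(n,r)$ denotes the number of matroids of rank $r$ on the ground set $[n]=\{1,\dots,n\}$, and $p(n,r)$ the number of paving matroids of rank $r$ on $[n]$ (rank-$r$ matroids all of whose circuits have at least $r$ elements). *)

theory Defs
  imports Main
begin

definition matroid :: "'a set \<Rightarrow> 'a set set \<Rightarrow> bool" where
  "matroid E \<I> \<longleftrightarrow>
     (\<forall>X\<in>\<I>. X \<subseteq> E) \<and>
     {} \<in> \<I> \<and>
     (\<forall>X Y. X \<in> \<I> \<and> Y \<subseteq> X \<longrightarrow> Y \<in> \<I>) \<and>
     (\<forall>X Y. X \<in> \<I> \<and> Y \<in> \<I> \<and> card X < card Y \<longrightarrow>
        (\<exists>y\<in>Y - X. insert y X \<in> \<I>))"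

definition matroid_rank :: "'a set set \<Rightarrow> nat \<Rightarrow> bool" where
  "matroid_rank \<I> r \<longleftrightarrow> (\<exists>B\<in>\<I>. card B = r) \<and> (\<forall>X\<in>\<I>. card X \<le> r)"

definition circuit :: "'a set \<Rightarrow> 'a set set \<Rightarrow> 'a set \<Rightarrow> bool" where
  "circuit E \<I> C \<longleftrightarrow> C \<subseteq> E \<and> C \<notin> \<I> \<and> (\<forall>D. D \<subset> C \<longrightarrow> D \<in> \<I>)"

definition paving :: "'a set \<Rightarrow> 'a set set \<Rightarrow> nat \<Rightarrow> bool" where
  "paving E \<I> r \<longleftrightarrow> matroid E \<I> \<and> matroid_rank \<I> r \<and>
     (\<forall>C. circuit E \<I> C \<longrightarrow> card C \<ge> r)"

definition num_matroids :: "nat \<Rightarrow> nat \<Rightarrow> nat" where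
  "num_matroids n r = card {\<I>. matroid {1..n} \<I> \<and> matroid_rank \<I> r}"

definition num_paving :: "nat \<Rightarrow> nat \<Rightarrow> nat" where
  "num_paving n r = card {\<I>. paving {1..n} \<I> r}"

end

theory Submission
  imports Defs
begin

text \<open>
  A rank-\<open>r\<close> matroid \<open>M\<close> is encoded by its truncation \<open>T\<close> (the independent sets of
  size \<open>< r\<close>, a matroid of rank \<open>r - 1\<close>) and a paving matroid \<open>P\<close> of rank \<open>r\<close>.
  Inside each hyperplane \<open>H\<close> of \<open>M\<close> choose greedily, in the order of the ground set, a block
  \<open>B \<subseteq> H\<close>: an element of \<open>H\<close> is skipped iff it is spanned by an independent set of size
  at most \<open>r - 2\<close> of earlier chosen elements. Then every element of \<open>H\<close> is spanned in this
  way by \<open>B\<close>, and two distinct blocks cannot share \<open>r - 1\<close> elements, because a circuit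
  inside the common part would make its largest element skipped. Hence declaring independent all
  sets of size \<open>< r\<close> and the \<open>r\<close>-sets contained in no block of size \<open>\<ge> r\<close> gives a
  paving matroid \<open>P\<close>. Spanning by sets of size \<open>\<le> r - 2\<close> is visible in \<open>T\<close>, so
  \<open>M\<close> can be read off from \<open>T\<close> and \<open>P\<close>: an \<open>r\<close>-set with an independent
  \<open>(r - 1)\<close>-subset is dependent iff it is spanned in this way by a set containing no basis
  of \<open>P\<close>. Thus \<open>M \<mapsto> (T, P)\<close> is injective.
\<close>

lemma finite_matroids: "finite E \<Longrightarrow> finite {I. matroid E I}"
  by (rule finite_subset[of _ "Pow (Pow E)"]) (auto simp: matroid_def)

subsection \<open>Greedy selection\<close>

fun greedy_prefix :: "(nat set \<Rightarrow> nat \<Rightarrow> bool) \<Rightarrow> nat set \<Rightarrow> nat \<Rightarrow> nat set" where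
  "greedy_prefix sp H 0 = {}"
| "greedy_prefix sp H (Suc k) =
     (if k \<in> H \<and> \<not> (\<exists>Z\<subseteq>greedy_prefix sp H k. sp Z k)
      then insert k (greedy_prefix sp H k) else greedy_prefix sp H k)"

definition greedy_part :: "(nat set \<Rightarrow> nat \<Rightarrow> bool) \<Rightarrow> nat set \<Rightarrow> nat set" where
  "greedy_part sp H = (\<Union>k. greedy_prefix sp H k)"

lemma greedy_prefix_subset: "greedy_prefix sp H k \<subseteq> H \<inter> {..<k}"
  by (induction k) auto

lemma greedy_prefix_mono: "k \<le> l \<Longrightarrow> greedy_prefix sp H k \<subseteq> greedy_prefix sp H l"
  by (induction rule: dec_induct) auto

lemma greedy_prefix_lessThan: "k \<le> l \<Longrightarrow> greedy_prefix sp H l \<inter> {..<k} = greedy_prefix sp H k"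
proof (induction rule: dec_induct)
  case base
  show ?case using greedy_prefix_subset[of sp H k] by auto
next
  case (step n)
  then show ?case by auto
qed

lemma greedy_part_lessThan: "greedy_part sp H \<inter> {..<k} = greedy_prefix sp H k"
proof
  show "greedy_part sp H \<inter> {..<k} \<subseteq> greedy_prefix sp H k"
  proof
    fix e assume "e \<in> greedy_part sp H \<inter> {..<k}"
    then obtain l where e: "e \<in> greedy_prefix sp H l" "e < k"
      unfolding greedy_part_def by auto
    show "e \<in> greedy_prefix sp H k"
    proof (cases "l \<le> k")
      case True
      then show ?thesis using e greedy_prefix_mono by blast
    next
      case False
      then show ?thesis using e greedy_prefix_lessThan[of k l sp H] by auto
    qed
  qed
  show "greedy_prefix sp H k \<subseteq> greedy_part sp H \<inter> {..<k}"
    using greedy_prefix_subset[of sp H k] unfolding greedy_part_def by auto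
qed

lemma greedy_part_iff:
  "e \<in> greedy_part sp H \<longleftrightarrow> e \<in> H \<and> \<not> (\<exists>Z\<subseteq>greedy_part sp H \<inter> {..<e}. sp Z e)"
proof -
  have "e \<in> greedy_part sp H \<longleftrightarrow> e \<in> greedy_part sp H \<inter> {..<Suc e}"
    by simp
  also have "\<dots> \<longleftrightarrow> e \<in> greedy_prefix sp H (Suc e)"
    by (simp only: greedy_part_lessThan)
  also have "\<dots> \<longleftrightarrow> e \<in> H \<and> \<not> (\<exists>Z\<subseteq>greedy_prefix sp H e. sp Z e)"
    using greedy_prefix_subset[of sp H e] by auto
  also have "\<dots> \<longleftrightarrow> e \<in> H \<and> \<not> (\<exists>Z\<subseteq>greedy_part sp H \<inter> {..<e}. sp Z e)"
    by (simp only: greedy_part_lessThan)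
  finally show ?thesis .
qed

lemma greedy_part_subset: "greedy_part sp H \<subseteq> H"
  using greedy_part_iff by blast

lemma greedy_part_spans:
  "e \<in> H \<Longrightarrow> e \<notin> greedy_part sp H \<Longrightarrow> \<exists>Z\<subseteq>greedy_part sp H. sp Z e"
  using greedy_part_iff[of e sp H] by blast

lemma greedy_part_not_spans:
  "e \<in> greedy_part sp H \<Longrightarrow> Z \<subseteq> greedy_part sp H \<Longrightarrow> \<forall>z\<in>Z. z < e \<Longrightarrow> \<not> sp Z e"
  using greedy_part_iff[of e sp H] by blast

lemma dependent_obtains_spanned_max:
  fixes W :: "'a::linorder set"
  assumes "finite W" "W \<notin> I" "{} \<in> I"
  obtains Z e where "insert e Z \<subseteq> W" "Z \<in> I" "insert e Z \<notin> I" "\<forall>z\<in>Z. z < e"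
proof -
  obtain C where C: "C \<subseteq> W" "C \<notin> I" and min: "\<And>C'. C' \<subseteq> W \<Longrightarrow> C' \<notin> I \<Longrightarrow> card C \<le> card C'"
    using ex_has_least_nat[of "\<lambda>C. C \<subseteq> W \<and> C \<notin> I" W card] assms(2) by blast
  have "finite C" "C \<noteq> {}"
    using C assms finite_subset by auto
  define e where "e = Max C"
  have e: "e \<in> C" "\<forall>z\<in>C - {e}. z < e"
    using Max_in Max_ge \<open>finite C\<close> \<open>C \<noteq> {}\<close> unfolding e_def
    by (auto intro: le_neq_trans)
  have "C - {e} \<in> I"
  proof (rule ccontr)
    assume "C - {e} \<notin> I"
    then have "card C \<le> card (C - {e})"
      using min[of "C - {e}"] C by blast
    then show False
      using card_Diff1_less[OF \<open>finite C\<close> e(1)] by simp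
  qed
  moreover have "insert e (C - {e}) = C"
    using e by auto
  ultimately show thesis
    using that[of e "C - {e}"] C e by auto
qed

subsection \<open>Paving families\<close>

definition paving_family :: "'a set \<Rightarrow> nat \<Rightarrow> 'a set set \<Rightarrow> 'a set set" where
  "paving_family E r \<B> = {X. X \<subseteq> E \<and> (card X < r \<or> card X = r \<and> (\<forall>B\<in>\<B>. \<not> X \<subseteq> B))}"

lemma paving_family_subset:
  assumes "finite E" "X \<in> paving_family E r \<B>" "Y \<subseteq> X"
  shows "Y \<in> paving_family E r \<B>"
proof (cases "card Y < r")
  case True
  then show ?thesis
    using assms(2,3) unfolding paving_family_def by auto
next
  case False
  have "X \<subseteq> E" "card X \<le> r"
    using assms(2) unfolding paving_family_def by auto
  have "finite X"
    using \<open>X \<subseteq> E\<close> assms(1) by (rule finite_subset)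
  then have "card Y \<le> card X"
    using assms(3) by (rule card_mono)
  then have "card Y = card X"
    using False \<open>card X \<le> r\<close> by linarith
  then have "Y = X"
    using card_subset_eq[OF \<open>finite X\<close> assms(3)] by simp
  then show ?thesis
    using assms(2) by simp
qed

lemma paving_family_insert:
  assumes "finite E" "X \<in> paving_family E r \<B>" "card X < r" "y \<in> E" "y \<notin> X"
    and avoid: "\<And>B. card X + 1 = r \<Longrightarrow> B \<in> \<B> \<Longrightarrow> X \<subseteq> B \<Longrightarrow> y \<notin> B"
  shows "insert y X \<in> paving_family E r \<B>"
proof -
  have "X \<subseteq> E"
    using assms(2) unfolding paving_family_def by auto
  then have "card (insert y X) = card X + 1"
    using finite_subset[OF _ assms(1)] assms(5) by simp
  moreover have "\<not> insert y X \<subseteq> B" if "card X + 1 = r" "B \<in> \<B>" for B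
    using avoid[OF that] by blast
  ultimately show ?thesis
    using \<open>X \<subseteq> E\<close> assms(3,4) unfolding paving_family_def by auto
qed

lemma paving_family_matroid:
  assumes "finite E" "1 \<le> r"
    and blocks_meet: "\<And>B B' W. B \<in> \<B> \<Longrightarrow> B' \<in> \<B> \<Longrightarrow> W \<subseteq> B \<Longrightarrow> W \<subseteq> B' \<Longrightarrow>
      card W + 1 = r \<Longrightarrow> B = B'"
  shows "matroid E (paving_family E r \<B>)"
  unfolding matroid_def
proof (intro conjI allI impI ballI)
  let ?P = "paving_family E r \<B>"
  show "X \<subseteq> E" if "X \<in> ?P" for X
    using that unfolding paving_family_def by blast
  show "{} \<in> ?P"
    using assms(2) unfolding paving_family_def by auto
  show "Y \<in> ?P" if "X \<in> ?P \<and> Y \<subseteq> X" for X Y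
    using paving_family_subset[OF assms(1)] that by blast
  show "\<exists>y\<in>Y - X. insert y X \<in> ?P" if XY: "X \<in> ?P \<and> Y \<in> ?P \<and> card X < card Y" for X Y
  proof -
    have "X \<subseteq> E" "Y \<subseteq> E" "card Y \<le> r"
      using XY unfolding paving_family_def by auto
    have "finite X"
      using \<open>X \<subseteq> E\<close> assms(1) by (rule finite_subset)
    obtain y where y: "y \<in> Y - X"
      and avoid: "\<And>B. card X + 1 = r \<Longrightarrow> B \<in> \<B> \<Longrightarrow> X \<subseteq> B \<Longrightarrow> y \<notin> B"
    proof (cases "card X + 1 = r \<and> (\<exists>B\<in>\<B>. X \<subseteq> B)")
      case True
      then obtain B where B: "B \<in> \<B>" "X \<subseteq> B" and X_card: "card X + 1 = r" by blast
      then have "\<not> Y \<subseteq> B"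
        using XY \<open>card Y \<le> r\<close> unfolding paving_family_def by auto
      then obtain y where "y \<in> Y" "y \<notin> B" by blast
      moreover have "B' = B" if "B' \<in> \<B>" "X \<subseteq> B'" for B'
        using blocks_meet[OF that(1) B(1) that(2) B(2) X_card] .
      ultimately show thesis using that[of y] B by blast
    next
      case False
      have "\<not> Y \<subseteq> X"
        using XY card_mono[OF \<open>finite X\<close>, of Y] by auto
      then show thesis using that False by blast
    qed
    have "insert y X \<in> ?P"
      using paving_family_insert[OF assms(1)] XY y avoid \<open>Y \<subseteq> E\<close> \<open>card Y \<le> r\<close> by auto
    then show ?thesis
      using y by blast
  qed
qed

lemma paving_family_paving:
  assumes "finite E" "1 \<le> r"
    and blocks_meet: "\<And>B B' W. B \<in> \<B> \<Longrightarrow> B' \<in> \<B> \<Longrightarrow> W \<subseteq> B \<Longrightarrow> W \<subseteq> B' \<Longrightarrow>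
      card W + 1 = r \<Longrightarrow> B = B'"
    and uncovered: "X \<subseteq> E" "card X = r" "\<forall>B\<in>\<B>. \<not> X \<subseteq> B"
  shows "paving E (paving_family E r \<B>) r"
  unfolding paving_def
proof (intro conjI allI impI)
  show "matroid E (paving_family E r \<B>)"
    using paving_family_matroid[OF assms(1,2) blocks_meet] .
  show "matroid_rank (paving_family E r \<B>) r"
    using uncovered unfolding matroid_rank_def paving_family_def by auto
  show "r \<le> card C" if "circuit E (paving_family E r \<B>) C" for C
    using that unfolding circuit_def paving_family_def by auto
qed

subsection \<open>Truncation and spanning by small sets\<close>

definition truncation :: "'a set set \<Rightarrow> nat \<Rightarrow> 'a set set" where
  "truncation I k = {X \<in> I. card X < k}"

definition spans_small :: "'a set set \<Rightarrow> nat \<Rightarrow> 'a set \<Rightarrow> 'a \<Rightarrow> bool" where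
  "spans_small I r Z e \<longleftrightarrow> Z \<in> I \<and> card Z + 2 \<le> r \<and> insert e Z \<notin> I"

definition small_closure :: "'a set \<Rightarrow> 'a set set \<Rightarrow> nat \<Rightarrow> 'a set \<Rightarrow> 'a set" where
  "small_closure E I r S = S \<union> {e \<in> E. \<exists>Z\<subseteq>S. spans_small I r Z e}"

lemma spans_small_truncation: "spans_small (truncation I r) r Z e \<longleftrightarrow> spans_small I r Z e"
proof -
  have "card Z + 2 \<le> r \<Longrightarrow> card (insert e Z) < r"
    using card_insert_le_m1[of "r - 1" Z e] by linarith
  then show ?thesis
    unfolding spans_small_def truncation_def by auto
qed

lemma small_closure_truncation: "small_closure E (truncation I r) r S = small_closure E I r S"
  unfolding small_closure_def spans_small_truncation ..

lemma subset_small_closure_greedy_part: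
  assumes "H \<subseteq> E"
  shows "H \<subseteq> small_closure E I r (greedy_part (spans_small I r) H)"
proof
  fix e assume "e \<in> H"
  then have "e \<in> E"
    using assms by (rule subsetD[rotated])
  show "e \<in> small_closure E I r (greedy_part (spans_small I r) H)"
    using greedy_part_spans[OF \<open>e \<in> H\<close>] \<open>e \<in> E\<close> unfolding small_closure_def by blast
qed

subsection \<open>Matroids of rank \<open>r\<close> and their hyperplanes\<close>

definition matroid_closure :: "'a set \<Rightarrow> 'a set set \<Rightarrow> 'a set \<Rightarrow> 'a set" where
  "matroid_closure E I J = {x \<in> E. x \<in> J \<or> insert x J \<notin> I}"

lemma matroid_closure_subset_ground: "matroid_closure E I J \<subseteq> E"
  unfolding matroid_closure_def by auto

locale rank_matroid =
  fixes E :: "'a set" and I :: "'a set set" and r :: nat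
  assumes matroid: "matroid E I"
    and rank: "matroid_rank I r"
    and finite_ground: "finite E"
    and rank_pos: "1 \<le> r"
begin

lemma indep_subset_ground: "X \<in> I \<Longrightarrow> X \<subseteq> E"
  using matroid unfolding matroid_def by blast

lemma indep_finite: "X \<in> I \<Longrightarrow> finite X"
  using indep_subset_ground finite_ground finite_subset by blast

lemma empty_indep: "{} \<in> I"
  using matroid unfolding matroid_def by blast

lemma indep_subset: "X \<in> I \<Longrightarrow> Y \<subseteq> X \<Longrightarrow> Y \<in> I"
  using matroid unfolding matroid_def by blast

lemma indep_exchange: "X \<in> I \<Longrightarrow> Y \<in> I \<Longrightarrow> card X < card Y \<Longrightarrow> \<exists>y\<in>Y - X. insert y X \<in> I"
  using matroid unfolding matroid_def by blast

lemma indep_card_le: "X \<in> I \<Longrightarrow> card X \<le> r"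
  using rank unfolding matroid_rank_def by blast

lemma exists_indep_card: "k \<le> r \<Longrightarrow> \<exists>X\<in>I. card X = k"
proof -
  assume "k \<le> r"
  obtain B where "B \<in> I" "card B = r"
    using rank unfolding matroid_rank_def by blast
  moreover obtain X where "X \<subseteq> B" "card X = k"
    using obtain_subset_with_card_n \<open>k \<le> r\<close> calculation(2) by metis
  ultimately show ?thesis
    using indep_subset by blast
qed

lemma indep_augment:
  "Z \<in> I \<Longrightarrow> Y \<in> I \<Longrightarrow> card Z \<le> card Y \<Longrightarrow>
    \<exists>W\<in>I. Z \<subseteq> W \<and> W \<subseteq> Z \<union> Y \<and> card W = card Y"
proof (induction "card Y - card Z" arbitrary: Z)
  case 0
  then show ?case by auto
next
  case (Suc k)
  then obtain y where y: "y \<in> Y - Z" "insert y Z \<in> I"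
    using indep_exchange by (metis zero_less_Suc zero_less_diff)
  have "card (insert y Z) = card Z + 1"
    using y indep_finite[OF Suc.prems(1)] by simp
  then obtain W where "W \<in> I" "insert y Z \<subseteq> W" "W \<subseteq> insert y Z \<union> Y" "card W = card Y"
    using Suc.hyps(1)[of "insert y Z"] Suc.hyps(2) Suc.prems y by fastforce
  then show ?case
    using y by blast
qed

lemma truncation_matroid:
  assumes "1 \<le> k"
  shows "matroid E (truncation I k)"
  unfolding matroid_def truncation_def
proof (intro conjI allI impI ballI)
  show "X \<subseteq> E" if "X \<in> {X \<in> I. card X < k}" for X
    using that indep_subset_ground by blast
  show "{} \<in> {X \<in> I. card X < k}"
    using assms empty_indep by simp
  show "Y \<in> {X \<in> I. card X < k}" if "X \<in> {X \<in> I. card X < k} \<and> Y \<subseteq> X" for X Y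
    using that indep_subset card_mono[OF indep_finite, of X Y] by fastforce
  show "\<exists>y\<in>Y - X. insert y X \<in> {X \<in> I. card X < k}"
    if XY: "X \<in> {X \<in> I. card X < k} \<and> Y \<in> {X \<in> I. card X < k} \<and> card X < card Y" for X Y
  proof -
    obtain y where y: "y \<in> Y - X" "insert y X \<in> I"
      using XY indep_exchange by blast
    moreover have "card (insert y X) < k"
      using XY y indep_finite by simp
    ultimately show ?thesis by blast
  qed
qed

lemma truncation_rank: "matroid_rank (truncation I r) (r - 1)"
  using exists_indep_card[of "r - 1"] rank_pos unfolding matroid_rank_def truncation_def by auto

context
  fixes J
  assumes J_indep: "J \<in> I" and J_card: "card J + 1 = r"
begin

lemma subset_matroid_closure: "J \<subseteq> matroid_closure E I J"
  using indep_subset_ground[OF J_indep] unfolding matroid_closure_def by auto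

lemma indep_in_matroid_closure_card_less:
  assumes Y: "Y \<subseteq> matroid_closure E I J" "Y \<in> I"
  shows "card Y < r"
proof (rule ccontr)
  assume "\<not> card Y < r"
  then have "card Y = r"
    using indep_card_le[OF Y(2)] by simp
  then obtain W where W: "W \<in> I" "J \<subseteq> W" "W \<subseteq> J \<union> Y" "card W = r"
    using indep_augment[OF J_indep Y(2)] J_card by auto
  then have "W \<noteq> J"
    using J_card by auto
  then obtain w where w: "w \<in> W" "w \<notin> J"
    using W(2) by blast
  then have "insert w J \<in> I" "w \<in> Y"
    using indep_subset[OF W(1), of "insert w J"] W(2,3) by auto
  then show False
    using Y(1) w(2) unfolding matroid_closure_def by blast
qed

lemma matroid_closure_spanned:
  assumes Z: "Z \<subseteq> matroid_closure E I J" "Z \<in> I"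
    and e: "e \<in> E" "insert e Z \<notin> I"
  shows "e \<in> matroid_closure E I J"
proof (rule ccontr)
  assume "e \<notin> matroid_closure E I J"
  then have eJ: "e \<notin> J" "insert e J \<in> I"
    using e(1) unfolding matroid_closure_def by auto
  have "card (insert e J) = r"
    using eJ J_card indep_finite[OF J_indep] by simp
  then obtain W where W: "W \<in> I" "Z \<subseteq> W" "W \<subseteq> Z \<union> insert e J" "card W = r"
    using indep_augment[OF Z(2) eJ(2)] indep_card_le[OF Z(2)] by auto
  show False
  proof (cases "e \<in> W")
    case True
    then show False
      using indep_subset[OF W(1), of "insert e Z"] W(2) e(2) by blast
  next
    case False
    then have "W \<subseteq> matroid_closure E I J"
      using W(3) Z(1) subset_matroid_closure by auto
    then show False
      using indep_in_matroid_closure_card_less[OF _ W(1)] W(4) by simp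
  qed
qed

lemma small_closure_subset_matroid_closure:
  "S \<subseteq> matroid_closure E I J \<Longrightarrow> small_closure E I r S \<subseteq> matroid_closure E I J"
  unfolding small_closure_def spans_small_def using matroid_closure_spanned by blast

lemma matroid_closure_eq:
  assumes K: "K \<in> I" "card K + 1 = r" "K \<subseteq> matroid_closure E I J"
  shows "matroid_closure E I K = matroid_closure E I J"
proof
  show "matroid_closure E I K \<subseteq> matroid_closure E I J"
  proof
    fix x assume x: "x \<in> matroid_closure E I K"
    show "x \<in> matroid_closure E I J"
    proof (cases "x \<in> K")
      case True
      then show ?thesis using K(3) by blast
    next
      case False
      then show ?thesis
        using x matroid_closure_spanned[OF K(3,1)] unfolding matroid_closure_def by blast
    qed
  qed
  show "matroid_closure E I J \<subseteq> matroid_closure E I K"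
  proof
    fix x assume x: "x \<in> matroid_closure E I J"
    have "insert x K \<notin> I" if "x \<notin> K"
    proof
      assume indep: "insert x K \<in> I"
      have "insert x K \<subseteq> matroid_closure E I J"
        using x K(3) by blast
      then have "card (insert x K) < r"
        using indep by (rule indep_in_matroid_closure_card_less)
      then show False
        using that K(2) indep_finite[OF K(1)] by simp
    qed
    then show "x \<in> matroid_closure E I K"
      using x unfolding matroid_closure_def by blast
  qed
qed

end

lemma low_rank_subset_matroid_closure:
  assumes A: "A \<subseteq> E" "\<forall>Y\<subseteq>A. Y \<in> I \<longrightarrow> card Y < r"
  shows "\<exists>J\<in>I. card J + 1 = r \<and> A \<subseteq> matroid_closure E I J"
proof -
  have "\<forall>Y. Y \<subseteq> A \<and> Y \<in> I \<longrightarrow> card Y < Suc r"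
    using indep_card_le by (simp add: le_imp_less_Suc)
  then obtain K where K: "K \<subseteq> A" "K \<in> I"
    and K_max: "\<forall>Y. Y \<subseteq> A \<and> Y \<in> I \<longrightarrow> card Y \<le> card K"
    using ex_has_greatest_nat[of "\<lambda>Y. Y \<subseteq> A \<and> Y \<in> I" "{}" card "Suc r"] empty_indep
    by blast
  obtain B where B: "B \<in> I" "card B = r - 1"
    using exists_indep_card[of "r - 1"] by auto
  have "card K \<le> card B"
    using A(2) K B by auto
  then obtain J where J: "J \<in> I" "K \<subseteq> J" "J \<subseteq> K \<union> B" "card J = r - 1"
    using indep_augment[OF K(2) B(1)] B(2) by auto
  have J_card: "card J + 1 = r"
    using J(4) rank_pos by simp
  have "a \<in> matroid_closure E I J" if a: "a \<in> A" "a \<notin> J" for a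
  proof -
    have "a \<notin> K" "insert a K \<subseteq> A"
      using a J(2) K(1) by auto
    have "insert a K \<notin> I"
    proof
      assume "insert a K \<in> I"
      then have "card (insert a K) \<le> card K"
        using K_max \<open>insert a K \<subseteq> A\<close> by blast
      then show False
        using \<open>a \<notin> K\<close> indep_finite[OF K(2)] by simp
    qed
    then have "insert a J \<notin> I"
      using J(2) indep_subset[of "insert a J" "insert a K"] by blast
    then show ?thesis
      using a A(1) unfolding matroid_closure_def by blast
  qed
  then have "A \<subseteq> matroid_closure E I J"
    using subset_matroid_closure[OF J(1) J_card] by blast
  then show ?thesis
    using J(1) J_card by blast
qed

end

subsection \<open>Blocks and reconstruction\<close>

definition blocks :: "nat set \<Rightarrow> nat set set \<Rightarrow> nat \<Rightarrow> nat set set" where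
  "blocks E I r = {B. \<exists>J\<in>I. card J + 1 = r \<and>
     B = greedy_part (spans_small I r) (matroid_closure E I J) \<and> r \<le> card B}"

definition reconstruct :: "'a set \<Rightarrow> 'a set set \<Rightarrow> 'a set set \<Rightarrow> nat \<Rightarrow> 'a set set" where
  "reconstruct E T P r = T \<union> {X. X \<subseteq> E \<and> card X = r \<and> (\<exists>x\<in>X. X - {x} \<in> T) \<and>
     \<not> (\<exists>S\<subseteq>E. (\<forall>Y\<subseteq>S. card Y = r \<longrightarrow> Y \<notin> P) \<and> X \<subseteq> small_closure E T r S)}"

locale nat_rank_matroid = rank_matroid E I r for E :: "nat set" and I r
begin

lemma block_subset_matroid_closure:
  "B \<in> blocks E I r \<Longrightarrow> \<exists>J\<in>I. card J + 1 = r \<and> B \<subseteq> matroid_closure E I J"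
  unfolding blocks_def using greedy_part_subset by blast

lemma blocks_eq_if_common_subset:
  assumes B: "B \<in> blocks E I r" and B': "B' \<in> blocks E I r"
    and W: "W \<subseteq> B" "W \<subseteq> B'" "card W + 1 = r"
  shows "B = B'"
proof -
  obtain J where J: "J \<in> I" "card J + 1 = r"
    and B_eq: "B = greedy_part (spans_small I r) (matroid_closure E I J)"
    using B unfolding blocks_def by blast
  obtain J' where J': "J' \<in> I" "card J' + 1 = r"
    and B'_eq: "B' = greedy_part (spans_small I r) (matroid_closure E I J')"
    using B' unfolding blocks_def by blast
  have W_closure: "W \<subseteq> matroid_closure E I J" "W \<subseteq> matroid_closure E I J'"
    using W(1,2) greedy_part_subset[of "spans_small I r"] unfolding B_eq B'_eq by blast+
  show ?thesis
  proof (cases "W \<in> I")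
    case True
    have "matroid_closure E I J = matroid_closure E I J'"
      using matroid_closure_eq[OF J True W(3) W_closure(1)]
        matroid_closure_eq[OF J' True W(3) W_closure(2)] by simp
    then show ?thesis
      unfolding B_eq B'_eq by simp
  next
    case False
    \<comment> \<open>impossible: the largest element of a circuit in \<open>W\<close> would not have been chosen\<close>
    have "W \<subseteq> E"
      using W_closure(1) matroid_closure_subset_ground by (rule subset_trans)
    then have "finite W"
      using finite_ground by (rule finite_subset)
    then obtain Z e where Z: "insert e Z \<subseteq> W" "Z \<in> I" "insert e Z \<notin> I" "\<forall>z\<in>Z. z < e"
      using False empty_indep by (rule dependent_obtains_spanned_max)
    have "card (insert e Z) \<le> card W"
      using card_mono[OF \<open>finite W\<close> Z(1)] .
    moreover have "e \<notin> Z" "finite Z"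
      using Z(2,4) indep_finite by auto
    ultimately have "spans_small I r Z e"
      using Z(2,3) W(3) unfolding spans_small_def by simp
    moreover have "e \<in> B" "Z \<subseteq> B"
      using Z(1) W(1) by auto
    ultimately show ?thesis
      using greedy_part_not_spans[of e "spans_small I r" _ Z] Z(4) unfolding B_eq by blast
  qed
qed

lemma indep_card_rank_not_subset_block:
  assumes Y: "Y \<in> I" "card Y = r" and B: "B \<in> blocks E I r"
  shows "\<not> Y \<subseteq> B"
proof
  assume "Y \<subseteq> B"
  obtain J where J: "J \<in> I" "card J + 1 = r" "B \<subseteq> matroid_closure E I J"
    using block_subset_matroid_closure[OF B] by blast
  have "Y \<subseteq> matroid_closure E I J"
    using \<open>Y \<subseteq> B\<close> J(3) by (rule subset_trans)
  then have "card Y < r"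
    using indep_in_matroid_closure_card_less[OF J(1,2) _ Y(1)] by blast
  then show False
    using Y(2) by simp
qed

lemma indep_subset_paving_family: "I \<subseteq> paving_family E r (blocks E I r)"
proof
  fix X assume X: "X \<in> I"
  have "card X < r \<or> card X = r"
    using indep_card_le[OF X] by linarith
  then show "X \<in> paving_family E r (blocks E I r)"
    using indep_subset_ground[OF X] indep_card_rank_not_subset_block[OF X]
    unfolding paving_family_def by auto
qed

lemma paving_family_blocks_paving: "paving E (paving_family E r (blocks E I r)) r"
proof -
  obtain X where X: "X \<in> I" "card X = r"
    using exists_indep_card by blast
  have "\<forall>B\<in>blocks E I r. \<not> X \<subseteq> B"
    using indep_card_rank_not_subset_block[OF X] by blast
  moreover have "B = B'"
    if "B \<in> blocks E I r" "B' \<in> blocks E I r" "W \<subseteq> B" "W \<subseteq> B'" "card W + 1 = r" for B B' W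
    using that by (rule blocks_eq_if_common_subset)
  ultimately show ?thesis
    using paving_family_paving[OF finite_ground rank_pos _ indep_subset_ground[OF X(1)] X(2)]
    by blast
qed

lemma indep_card_rank_not_in_small_closure:
  assumes X: "X \<in> I" "card X = r"
    and S: "S \<subseteq> E" "\<forall>Y\<subseteq>S. card Y = r \<longrightarrow> Y \<notin> paving_family E r (blocks E I r)"
  shows "\<not> X \<subseteq> small_closure E I r S"
proof
  assume X_sub: "X \<subseteq> small_closure E I r S"
  have "card Y < r" if Y: "Y \<subseteq> S" "Y \<in> I" for Y
  proof -
    have "Y \<in> paving_family E r (blocks E I r)"
      using indep_subset_paving_family Y(2) by (rule subsetD)
    then have "card Y \<noteq> r"
      using S(2) Y(1) by blast
    then show ?thesis
      using indep_card_le[OF Y(2)] by simp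
  qed
  then obtain J where J: "J \<in> I" "card J + 1 = r" "S \<subseteq> matroid_closure E I J"
    using low_rank_subset_matroid_closure[OF S(1)] by blast
  have "X \<subseteq> matroid_closure E I J"
    using X_sub small_closure_subset_matroid_closure[OF J] by (rule subset_trans)
  then show False
    using indep_in_matroid_closure_card_less[OF J(1,2) _ X(1)] X(2) by simp
qed

lemma dependent_in_small_closure:
  assumes X: "X \<subseteq> E" "card X = r" "X \<notin> I" and x: "x \<in> X" "X - {x} \<in> I"
  shows "\<exists>S\<subseteq>E. (\<forall>Y\<subseteq>S. card Y = r \<longrightarrow> Y \<notin> paving_family E r (blocks E I r)) \<and>
    X \<subseteq> small_closure E I r S"
proof -
  define K where "K = X - {x}"
  define H where "H = matroid_closure E I K"
  define S where "S = greedy_part (spans_small I r) H"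
  have "finite X"
    using X(1) finite_ground by (rule finite_subset)
  then have K_card: "card K + 1 = r"
    using X(2) x(1) rank_pos unfolding K_def by simp
  have "X \<subseteq> H"
    using X x unfolding H_def K_def matroid_closure_def by (auto simp: insert_absorb)
  have S_sub: "S \<subseteq> H" "H \<subseteq> E"
    unfolding S_def H_def by (rule greedy_part_subset, rule matroid_closure_subset_ground)
  have "finite S"
    using subset_trans[OF S_sub] finite_ground by (rule finite_subset)
  have "Y \<notin> paving_family E r (blocks E I r)" if Y: "Y \<subseteq> S" "card Y = r" for Y
  proof -
    have "r \<le> card S"
      using card_mono[OF \<open>finite S\<close> Y(1)] Y(2) by simp
    then have "S \<in> blocks E I r"
      unfolding blocks_def using x(2) K_card
      by (intro CollectI bexI[of _ K]) (simp_all add: S_def H_def K_def)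
    then show ?thesis
      using Y unfolding paving_family_def by auto
  qed
  moreover have "H \<subseteq> small_closure E I r S"
    unfolding S_def using S_sub(2) by (rule subset_small_closure_greedy_part)
  ultimately show ?thesis
    using S_sub \<open>X \<subseteq> H\<close> by (intro exI[of _ S]) auto
qed

lemma indep_subset_reconstruct:
  "I \<subseteq> reconstruct E (truncation I r) (paving_family E r (blocks E I r)) r"
proof
  fix X assume "X \<in> I"
  show "X \<in> reconstruct E (truncation I r) (paving_family E r (blocks E I r)) r"
  proof (cases "card X < r")
    case True
    then show ?thesis
      using \<open>X \<in> I\<close> unfolding reconstruct_def truncation_def by simp
  next
    case False
    then have X_card: "card X = r"
      using indep_card_le[OF \<open>X \<in> I\<close>] by simp
    then have "X \<noteq> {}"
      using rank_pos by auto
    then obtain x where x: "x \<in> X"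
      by blast
    have "X - {x} \<in> truncation I r"
      using indep_subset[OF \<open>X \<in> I\<close>] card_Diff1_less[OF indep_finite[OF \<open>X \<in> I\<close>] x] X_card
      unfolding truncation_def by simp
    moreover have "\<not> (\<exists>S\<subseteq>E. (\<forall>Y\<subseteq>S. card Y = r \<longrightarrow> Y \<notin> paving_family E r (blocks E I r)) \<and>
        X \<subseteq> small_closure E I r S)"
      using indep_card_rank_not_in_small_closure[OF \<open>X \<in> I\<close> X_card] by blast
    ultimately show ?thesis
      using x X_card indep_subset_ground[OF \<open>X \<in> I\<close>]
      unfolding reconstruct_def small_closure_truncation by auto
  qed
qed

lemma reconstruct_subset_indep:
  "reconstruct E (truncation I r) (paving_family E r (blocks E I r)) r \<subseteq> I"
proof
  fix X assume X: "X \<in> reconstruct E (truncation I r) (paving_family E r (blocks E I r)) r"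
  show "X \<in> I"
  proof (cases "X \<in> truncation I r")
    case True
    then show ?thesis
      unfolding truncation_def by simp
  next
    case False
    then obtain x where "X \<subseteq> E" "card X = r" "x \<in> X" "X - {x} \<in> I"
      and "\<not> (\<exists>S\<subseteq>E. (\<forall>Y\<subseteq>S. card Y = r \<longrightarrow> Y \<notin> paving_family E r (blocks E I r)) \<and>
        X \<subseteq> small_closure E I r S)"
      using X unfolding reconstruct_def small_closure_truncation by (auto simp: truncation_def)
    then show ?thesis
      using dependent_in_small_closure by blast
  qed
qed

theorem reconstruct_truncation_paving:
  "reconstruct E (truncation I r) (paving_family E r (blocks E I r)) r = I"
  using reconstruct_subset_indep indep_subset_reconstruct by (rule antisym)

end

theorem lemma4p4:
  fixes n r :: nat
  assumes "1 \<le> r" and "r \<le> n"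
  shows "num_matroids n r \<le> num_matroids n (r - 1) * num_paving n r"
proof -
  define E where "E = {1..n}"
  define M where "M = {I. matroid E I \<and> matroid_rank I r}"
  define T where "T = {I. matroid E I \<and> matroid_rank I (r - 1)}"
  define P where "P = {I. paving E I r}"
  define encode where "encode I = (truncation I r, paving_family E r (blocks E I r))" for I
  have encode_mem: "encode I \<in> T \<times> P"
    and decode: "reconstruct E (fst (encode I)) (snd (encode I)) r = I" if "I \<in> M" for I
  proof -
    interpret nat_rank_matroid E I r
      using that assms(1) unfolding M_def E_def by unfold_locales auto
    show "encode I \<in> T \<times> P"
      unfolding encode_def T_def P_def
      using truncation_matroid[OF assms(1)] truncation_rank paving_family_blocks_paving by simp
    show "reconstruct E (fst (encode I)) (snd (encode I)) r = I"
      unfolding encode_def using reconstruct_truncation_paving by simp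
  qed
  have "inj_on encode M"
    using decode by (rule inj_on_inverseI)
  moreover have "encode ` M \<subseteq> T \<times> P"
    using encode_mem by blast
  moreover have "finite {I. matroid E I}"
    unfolding E_def by (rule finite_matroids) simp
  then have "finite T" "finite P"
    by (rule finite_subset[rotated], auto simp: T_def P_def paving_def)+
  ultimately have "card M \<le> card T * card P"
    using card_inj_on_le[of encode M "T \<times> P"] by (simp add: card_cartesian_product)
  then show ?thesis
    unfolding num_matroids_def num_paving_def M_def T_def P_def E_def .
qed

end
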